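(* Let $\rho$ be a state of a $d$-dimensional system ($d<\infty$), let $A,B$ be two copies with $\rho_A=\rho_B=\rho$, and let $j$ be an integer with $1\le j\le d-1$. For each $c$, let $d^{(j,c)}:=\dim\mathcal{V}^{(j,c)}_{\rm in}$ where $\mathcal{V}^{(j,c)}_{\rm in}:=\mathrm{span}\{|n+j,m\rangle\langle n,m|: n+m=c\}$ (over $n,n+j,m\in\{0,\dots,d-1\}$). Then $$\Delta M_A^{(j)}\le\sum_{c=0}^{2d-2-j}\big\|\Pi_{c+j}(\rho\otimes\rho)^{(j)}\Pi_c\big\|_{d^{(j,c)}\text{-KF}}-\|\rho^{(j)}\|_1.$$
   Context: Local observable $L=\sum_{n=0}^{d-1}n|n\rangle\langle n|$, $L_{AB}=L\otimes\mathbb{I}+\mathbb{I}\otimes L=\sum_{c=0}^{2d-2}c\,\Pi_c$, where $\Pi_c$ is the projector onto the eigenvalue-$c$ eigenspace of $L_{AB}$. Single-system mode: $\rho^{(j)}:=\sum_n|n+j\rangle\langle n+j|\rho|n\rangle\langle n|$ (out-of-range terms omitted); bipartite mode: $X^{(j)}:=\sum_c\Pi_{c+j}X\Pi_c$. $M^{(j)}(\sigma):=\|\sigma^{(j)}\|_1$. $\Delta M_A^{(j)}:=\max_{V_{AB}}M^{(j)}(\sigma_A)-M^{(j)}(\rho)$, $\sigma_A=\mathrm{tr}_B[V_{AB}(\rho\otimes\rho)V_{AB}^\dagger]$, maximum over unitaries with $[V_{AB},L_{AB}]=0$. $\|P\|_{\alpha\text{-KF}}$ is the sum of the $\alpha$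 largest singular values of $P$. *)

theory Defs
  imports "Jordan_Normal_Form.Schur_Decomposition" "HOL-Computational_Algebra.Polynomial"
    "HOL-Library.Multiset"
begin

text \<open>The d-dimensional system has basis 0..d-1; the bipartite basis vector
  |n,m> of AB has index n*d+m (A = first factor, B = second factor).\<close>

definition mtrace :: "complex mat \<Rightarrow> complex" where
  "mtrace A = (\<Sum>i<dim_row A. A $$ (i,i))"

definition hermitian :: "complex mat \<Rightarrow> bool" where
  "hermitian A \<longleftrightarrow> mat_adjoint A = A"

definition psd :: "nat \<Rightarrow> complex mat \<Rightarrow> bool" where
  "psd n A \<longleftrightarrow> A \<in> carrier_mat n n \<and> hermitian A \<and>
     (\<forall>v \<in> carrier_vec n. 0 \<le> Re (cscalar_prod (A *\<^sub>v v) v))"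

definition density_op :: "nat \<Rightarrow> complex mat \<Rightarrow> bool" where
  "density_op n \<rho> \<longleftrightarrow> psd n \<rho> \<and> mtrace \<rho> = 1"

definition unitary :: "nat \<Rightarrow> complex mat \<Rightarrow> bool" where
  "unitary n U \<longleftrightarrow> U \<in> carrier_mat n n \<and> mat_adjoint U * U = 1\<^sub>m n \<and> U * mat_adjoint U = 1\<^sub>m n"

definition singular_values :: "complex mat \<Rightarrow> real multiset" where
  "singular_values A = image_mset (\<lambda>z. sqrt (Re z)) (proots (char_poly (mat_adjoint A * A)))"

definition trace_norm :: "complex mat \<Rightarrow> real" where
  "trace_norm A = sum_mset (singular_values A)"

definition ky_fan_norm :: "nat \<Rightarrow> complex mat \<Rightarrow> real" where
  "ky_fan_norm k A = sum_list (take k (rev (sorted_list_of_multiset (singular_values A))))"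

definition tensor :: "nat \<Rightarrow> complex mat \<Rightarrow> complex mat \<Rightarrow> complex mat" where
  "tensor d X Y = mat (d*d) (d*d) (\<lambda>(i,k). X $$ (i div d, k div d) * Y $$ (i mod d, k mod d))"

text \<open>Eigenvalue of L_AB = L \<otimes> I + I \<otimes> L on basis vector |n,m>: n+m.\<close>
definition Lval :: "nat \<Rightarrow> nat \<Rightarrow> nat" where
  "Lval d i = i div d + i mod d"

definition L_AB :: "nat \<Rightarrow> complex mat" where
  "L_AB d = mat (d*d) (d*d) (\<lambda>(i,k). if i = k then of_nat (Lval d i) else 0)"

definition Pi_proj :: "nat \<Rightarrow> nat \<Rightarrow> complex mat" where
  "Pi_proj d c = mat (d*d) (d*d) (\<lambda>(i,k). if i = k \<and> Lval d i = c then 1 else 0)"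

text \<open>Single-system mode: rho^(j) = sum_n |n+j><n+j| rho |n><n| (entries (n+j,n)).\<close>
definition smode :: "nat \<Rightarrow> nat \<Rightarrow> complex mat \<Rightarrow> complex mat" where
  "smode d j \<rho> = mat d d (\<lambda>(a,b). if a = b + j then \<rho> $$ (a,b) else 0)"

text \<open>Bipartite mode: X^(j) = sum_c Pi_(c+j) X Pi_c (entries between eigenspaces c+j and c).\<close>
definition bmode :: "nat \<Rightarrow> nat \<Rightarrow> complex mat \<Rightarrow> complex mat" where
  "bmode d j X = mat (d*d) (d*d) (\<lambda>(a,b). if Lval d a = Lval d b + j then X $$ (a,b) else 0)"

definition Mj :: "nat \<Rightarrow> nat \<Rightarrow> complex mat \<Rightarrow> real" where
  "Mj d j \<sigma> = trace_norm (smode d j \<sigma>)"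

definition ptrace_B :: "nat \<Rightarrow> complex mat \<Rightarrow> complex mat" where
  "ptrace_B d X = mat d d (\<lambda>(n,n'). \<Sum>m<d. X $$ (n*d+m, n'*d+m))"

definition DeltaM_A :: "nat \<Rightarrow> nat \<Rightarrow> complex mat \<Rightarrow> real" where
  "DeltaM_A d j \<rho> =
     Sup {Mj d j (ptrace_B d (V * tensor d \<rho> \<rho> * mat_adjoint V)) | V.
            unitary (d*d) V \<and> V * L_AB d = L_AB d * V} - Mj d j \<rho>"

text \<open>d^(j,c) = dim span{|n+j,m><n,m| : n+m=c}; these are distinct matrix units,
  hence linearly independent, so the dimension is the number of index pairs.\<close>
definition dim_in :: "nat \<Rightarrow> nat \<Rightarrow> nat \<Rightarrow> nat" where
  "dim_in d j c = card {(n,m). n + j < d \<and> m < d \<and> n + m = c}"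

end

theory Submission
  imports Defs
begin

(*
  Fix an admissible V, put Y = V (rho (x) rho) V^H and A = sigma^(j) for sigma = tr_B Y, so that
  A_(n+j,n) = sum_m Y_((n+j)d+m, nd+m).  The singular value decomposition of A yields a matrix T whose
  entries have modulus at most 1 and with sum_(a,b) T_(b,a) A_(a,b) = ||A||_1.  Grouping the pairs (n,m)
  by c = n + m, the entries of Y that occur for a fixed c sit at pairwise distinct rows and columns of
  the block Pi_(c+j) Y Pi_c, and there are d^(j,c) of them.  Writing each entry through the singular
  value decomposition of the block, AM-GM and Bessel's inequality turn such a sum into a combination
  of singular values with weights in [0,1] of total weight at most d^(j,c), which is dominated by the
  Ky Fan norm.  Finally V commutes with L_AB, hence with every Pi_c, so Pi_(c+j) Y Pi_c is unitarily
  similar to Pi_(c+j) (rho (x) rho) Pi_c = Pi_(c+j) (rho (x) rho)^(j) Pi_c.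
*)

lemma mat_adjoint_dim [simp]:
  "dim_row (mat_adjoint A) = dim_col A" "dim_col (mat_adjoint A) = dim_row A"
  unfolding mat_adjoint_def by auto

lemma mat_adjoint_carrier [simp]: "A \<in> carrier_mat m n \<Longrightarrow> mat_adjoint A \<in> carrier_mat n m"
  unfolding carrier_mat_def by auto

lemma mat_adjoint_index [simp]:
  "i < dim_col A \<Longrightarrow> j < dim_row A \<Longrightarrow> mat_adjoint A $$ (i,j) = cnj (A $$ (j,i))"
  unfolding mat_adjoint_def by (simp add: mat_of_rows_index)

lemma mat_adjoint_adjoint [simp]: "mat_adjoint (mat_adjoint (A :: complex mat)) = A"
  by (rule eq_matI) auto

lemma mat_adjoint_one [simp]: "mat_adjoint (1\<^sub>m n :: complex mat) = 1\<^sub>m n"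
  by (rule eq_matI) auto

lemma mat_adjoint_mult:
  assumes "A \<in> carrier_mat m n" "B \<in> carrier_mat n k"
  shows "mat_adjoint (A * B :: complex mat) = mat_adjoint B * mat_adjoint A"
proof (rule eq_matI)
  fix i j assume "i < dim_row (mat_adjoint B * mat_adjoint A)" "j < dim_col (mat_adjoint B * mat_adjoint A)"
  with assms have "i < k" "j < m" by auto
  with assms show "mat_adjoint (A * B) $$ (i,j) = (mat_adjoint B * mat_adjoint A) $$ (i,j)"
    by (simp add: scalar_prod_def mult.commute)
qed (use assms in auto)

lemma mat_adjoint_mult_self_index:
  assumes "A \<in> carrier_mat m n" "i < n" "j < n"
  shows "(mat_adjoint A * A) $$ (i,j) = col A j \<bullet>c col (A :: complex mat) i"
  using assms by (simp add: scalar_prod_def mult.commute)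

lemma unitaryD:
  assumes "unitary n U"
  shows "U \<in> carrier_mat n n" "mat_adjoint U * U = 1\<^sub>m n" "U * mat_adjoint U = 1\<^sub>m n"
  using assms unfolding unitary_def by auto

lemma unitary_mult_cancel:
  assumes "unitary n U" "A \<in> carrier_mat n m"
  shows "U * (mat_adjoint U * A) = A" "mat_adjoint U * (U * A) = A"
  using unitaryD[OF assms(1)] assms(2) by (simp_all flip: assoc_mult_mat[of _ n n _ n _ m])

lemma unitary_one: "unitary n (1\<^sub>m n)"
  unfolding unitary_def by simp

lemma unitary_mult:
  assumes U: "unitary n U" and V: "unitary n V"
  shows "unitary n (U * V)"
proof -
  note UD = unitaryD[OF U] and VD = unitaryD[OF V]
  have "mat_adjoint (U * V) * (U * V) = mat_adjoint V * (mat_adjoint U * U) * V"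
    using UD(1) VD(1) mat_adjoint_carrier[OF UD(1)] mat_adjoint_carrier[OF VD(1)]
    by (simp add: mat_adjoint_mult assoc_mult_mat[of _ n n _ n _ n] mult_carrier_mat[of _ n n _ n])
  moreover have "U * V * mat_adjoint (U * V) = U * (V * mat_adjoint V) * mat_adjoint U"
    using UD(1) VD(1) mat_adjoint_carrier[OF UD(1)] mat_adjoint_carrier[OF VD(1)]
    by (simp add: mat_adjoint_mult assoc_mult_mat[of _ n n _ n _ n] mult_carrier_mat[of _ n n _ n])
  ultimately show ?thesis
    unfolding unitary_def using UD VD by simp
qed

definition block_diag :: "complex mat \<Rightarrow> complex mat \<Rightarrow> complex mat" where
  "block_diag A B = four_block_mat A (0\<^sub>m (dim_row A) (dim_col B)) (0\<^sub>m (dim_row B) (dim_col A)) B"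

lemma block_diag_carrier [simp]:
  "A \<in> carrier_mat m n \<Longrightarrow> B \<in> carrier_mat p q \<Longrightarrow> block_diag A B \<in> carrier_mat (m + p) (n + q)"
  unfolding block_diag_def by auto

lemma block_diag_mult:
  assumes "A \<in> carrier_mat m n" "B \<in> carrier_mat p q" "C \<in> carrier_mat n k" "D \<in> carrier_mat q l"
  shows "block_diag A B * block_diag C D = block_diag (A * C) (B * D)"
  using assms unfolding block_diag_def
  by (subst mult_four_block_mat[of _ m n _ q _ p]) auto

lemma mat_adjoint_block_diag:
  "mat_adjoint (block_diag A B) = block_diag (mat_adjoint A) (mat_adjoint B)"
  unfolding block_diag_def by (rule eq_matI) auto

lemma block_diag_one [simp]: "block_diag (1\<^sub>m m) (1\<^sub>m n) = 1\<^sub>m (m + n)"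
  unfolding block_diag_def by simp

lemma unitary_block_diag:
  assumes "unitary m U" "unitary n V"
  shows "unitary (m + n) (block_diag U V)"
  using unitaryD[OF assms(1)] unitaryD[OF assms(2)]
  unfolding unitary_def by (simp add: mat_adjoint_block_diag block_diag_mult[of _ m m _ n n _ m _ n])

lemma diagonal_mat_block_diag:
  assumes "A \<in> carrier_mat m m" "B \<in> carrier_mat n n" "diagonal_mat A" "diagonal_mat B"
  shows "diagonal_mat (block_diag A B)"
  using assms unfolding diagonal_mat_def block_diag_def by auto

definition normalize_vec :: "complex vec \<Rightarrow> complex vec" where
  "normalize_vec x = complex_of_real (1 / sqrt (Re (x \<bullet>c x))) \<cdot>\<^sub>v x"

lemma normalize_vec_carrier [simp]: "x \<in> carrier_vec n \<Longrightarrow> normalize_vec x \<in> carrier_vec n"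
  unfolding normalize_vec_def by simp

lemma cscalar_prod_self_real:
  fixes x :: "complex vec"
  shows "x \<bullet>c x = of_real (Re (x \<bullet>c x))"
  using conjugate_square_ge_0_vec[of x] by (auto simp: less_eq_complex_def complex_eq_iff)

lemma cscalar_prod_smult:
  assumes "x \<in> carrier_vec n" "y \<in> carrier_vec n"
  shows "(a \<cdot>\<^sub>v x) \<bullet>c (b \<cdot>\<^sub>v (y :: complex vec)) = a * cnj b * (x \<bullet>c y)"
  using assms by (simp add: scalar_prod_def sum_distrib_left algebra_simps)

lemma cscalar_prod_normalize_vec:
  assumes "x \<in> carrier_vec n" "y \<in> carrier_vec n"
  shows "normalize_vec x \<bullet>c normalize_vec y
    = complex_of_real (1 / sqrt (Re (x \<bullet>c x)) * (1 / sqrt (Re (y \<bullet>c y)))) * (x \<bullet>c y)"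
  unfolding normalize_vec_def cscalar_prod_smult[OF assms] by simp

lemma normalize_vec_unit:
  assumes "x \<in> carrier_vec n" "x \<noteq> 0\<^sub>v n"
  shows "normalize_vec x \<bullet>c normalize_vec x = 1"
proof -
  define r where "r = Re (x \<bullet>c x)"
  have "x \<bullet>c x > 0" using assms by simp
  then have r: "r > 0" unfolding r_def by (simp add: less_complex_def)
  have "normalize_vec x \<bullet>c normalize_vec x = complex_of_real (1 / sqrt r * (1 / sqrt r) * r)"
    using cscalar_prod_normalize_vec[OF assms(1,1)] cscalar_prod_self_real[of x]
    unfolding r_def by (metis of_real_mult)
  also have "1 / sqrt r * (1 / sqrt r) * r = 1"
    using r by (simp add: field_simps)
  finally show ?thesis by simp
qed

lemma normalize_vec_unit_id: "x \<bullet>c x = 1 \<Longrightarrow> normalize_vec x = x"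
  unfolding normalize_vec_def by simp

lemma corthogonal_normalize_vec:
  assumes orth: "corthogonal ws" and ws: "set ws \<subseteq> carrier_vec n" and ij: "i < length ws" "j < length ws"
  shows "normalize_vec (ws ! i) \<bullet>c normalize_vec (ws ! j) = (if i = j then 1 else 0)"
proof -
  have carrier: "ws ! i \<in> carrier_vec n" "ws ! j \<in> carrier_vec n" using ws ij nth_mem by blast+
  show ?thesis
  proof (cases "i = j")
    case True
    have "ws ! i \<noteq> 0\<^sub>v n" using corthogonalD[OF orth ij(1) ij(1)] by auto
    then show ?thesis using True normalize_vec_unit[OF carrier(1)] by simp
  next
    case False
    then have "ws ! i \<bullet>c ws ! j = 0" using corthogonalD[OF orth ij] by auto
    then show ?thesis using False cscalar_prod_normalize_vec[OF carrier] by simp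
  qed
qed

lemma unitary_mat_of_cols:
  assumes ws: "set ws \<subseteq> carrier_vec n" "length ws = n"
    and orthonormal: "\<And>i j. i < n \<Longrightarrow> j < n \<Longrightarrow> ws ! i \<bullet>c ws ! j = (if i = j then 1 else 0)"
  shows "unitary n (mat_of_cols n ws)"
proof -
  define W where "W = mat_of_cols n ws"
  have W: "W \<in> carrier_mat n n" unfolding W_def using mat_of_cols_carrier(1)[of n ws] ws(2) by simp
  have col_W: "col W i = ws ! i" if "i < n" for i
    unfolding W_def using that ws nth_mem by (auto intro!: col_mat_of_cols)
  have WW: "mat_adjoint W * W = 1\<^sub>m n"
  proof (rule eq_matI)
    fix i j assume "i < dim_row (1\<^sub>m n :: complex mat)" "j < dim_col (1\<^sub>m n :: complex mat)"
    then have ij: "i < n" "j < n" by auto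
    then show "(mat_adjoint W * W) $$ (i,j) = 1\<^sub>m n $$ (i,j)"
      using orthonormal[OF ij(2,1)] mat_adjoint_mult_self_index[OF W ij] col_W by auto
  qed (use W in auto)
  then show ?thesis
    unfolding unitary_def W_def[symmetric] using W mat_mult_left_right_inverse[OF _ W WW] by auto
qed

lemma unit_vec_extends_to_unitary:
  assumes v: "v \<in> carrier_vec n" and v1: "v \<bullet>c v = 1"
  obtains W where "unitary n W" "col W 0 = v"
proof -
  have v0: "v \<noteq> 0\<^sub>v n" using v1 by auto
  have n: "0 < n" using v v1 by (cases n) (auto simp: scalar_prod_def)
  interpret cof_vec_space n "TYPE(complex)" .
  define b where "b = basis_completion v"
  note b = basis_completion[OF v v0, folded b_def]
  then obtain bs where bv: "b = v # bs" using n by (cases b) auto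
  define ws0 where "ws0 = gram_schmidt n b"
  note ws0 = gram_schmidt_result[OF b(2,4,5) ws0_def]
  have len: "length ws0 = n" using ws0(4) b(6) by simp
  define ws where "ws = map normalize_vec ws0"
  have ws: "set ws \<subseteq> carrier_vec n" "length ws = n" unfolding ws_def using ws0(3) len by auto
  moreover have "ws ! i \<bullet>c ws ! j = (if i = j then 1 else 0)" if "i < n" "j < n" for i j
    using corthogonal_normalize_vec[OF ws0(2,3)] that len by (simp add: ws_def)
  ultimately have "unitary n (mat_of_cols n ws)" by (rule unitary_mat_of_cols)
  moreover have "hd ws0 = v" unfolding ws0_def bv using v by simp
  then have "ws ! 0 = v" using n len normalize_vec_unit_id[OF v1] unfolding ws_def by (cases ws0) auto
  then have "col (mat_of_cols n ws) 0 = v" using n ws v by simp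
  ultimately show ?thesis by (rule that)
qed

section \<open>The spectral theorem\<close>

lemma hermitian_index: "hermitian A \<Longrightarrow> A \<in> carrier_mat n n \<Longrightarrow> i < n \<Longrightarrow> j < n \<Longrightarrow>
  A $$ (i,j) = cnj (A $$ (j,i))"
  unfolding hermitian_def by (metis carrier_matD mat_adjoint_index)

lemma hermitian_unitary_conj:
  assumes h: "hermitian A" and A: "A \<in> carrier_mat n n" and W: "W \<in> carrier_mat n m"
  shows "hermitian (mat_adjoint W * A * W)"
proof -
  have "mat_adjoint (mat_adjoint W * A * W) = mat_adjoint W * mat_adjoint (mat_adjoint W * A)"
    by (rule mat_adjoint_mult[of _ m n]) (use A W in auto)
  also have "mat_adjoint (mat_adjoint W * A) = A * W"
    using h A W unfolding hermitian_def by (subst mat_adjoint_mult[of _ m n _ n]) auto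
  also have "mat_adjoint W * (A * W) = mat_adjoint W * A * W"
    by (rule assoc_mult_mat[symmetric]) (use A W in auto)
  finally show ?thesis unfolding hermitian_def .
qed

lemma unitary_conj_eigen_first_col:
  assumes W: "unitary n W" and A: "A \<in> carrier_mat n n"
    and Av: "A *\<^sub>v col W 0 = e \<cdot>\<^sub>v col W 0" and i: "i < n"
  shows "(mat_adjoint W * A * W) $$ (i,0) = (if i = 0 then e else 0)"
proof -
  note WD = unitaryD[OF W]
  have "(mat_adjoint W * A * W) $$ (i,0) = row (mat_adjoint W) i \<bullet> (A *\<^sub>v col W 0)"
    using WD(1) A i by (simp add: assoc_mult_mat[of _ n n _ n _ n] mult_mat_vec_def)
  also have "\<dots> = e * (mat_adjoint W * W) $$ (i,0)"
    unfolding Av using WD(1) i by simp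
  finally show ?thesis using WD(2) i by simp
qed

lemma hermitian_first_col_block:
  assumes h: "hermitian A" and A: "A \<in> carrier_mat (Suc n) (Suc n)"
    and col0: "\<And>i. i < Suc n \<Longrightarrow> A $$ (i,0) = (if i = 0 then e else 0)"
  obtains A3 where "A3 \<in> carrier_mat n n" "hermitian A3" "A = block_diag (mat 1 1 (\<lambda>_. e)) A3"
proof
  define A3 where "A3 = mat n n (\<lambda>(i,j). A $$ (Suc i, Suc j))"
  show "A3 \<in> carrier_mat n n" unfolding A3_def by simp
  show "hermitian A3"
    unfolding hermitian_def A3_def by (rule eq_matI) (auto intro: hermitian_index[OF h A, symmetric])
  have row0: "A $$ (0,j) = (if j = 0 then e else 0)" if "j < Suc n" for j
    using hermitian_index[OF h A _ that] hermitian_index[OF h A, of 0 0] col0 that by auto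
  show "A = block_diag (mat 1 1 (\<lambda>_. e)) A3"
  proof (rule eq_matI)
    fix i j assume "i < dim_row (block_diag (mat 1 1 (\<lambda>_. e)) A3)"
      "j < dim_col (block_diag (mat 1 1 (\<lambda>_. e)) A3)"
    then have ij: "i < Suc n" "j < Suc n" unfolding A3_def block_diag_def by auto
    then show "A $$ (i,j) = block_diag (mat 1 1 (\<lambda>_. e)) A3 $$ (i,j)"
      using col0 row0 unfolding A3_def block_diag_def by (cases i; cases j) auto
  qed (use A in \<open>auto simp: A3_def block_diag_def\<close>)
qed

lemma complex_unit_eigenvector_exists:
  fixes A :: "complex mat"
  assumes A: "A \<in> carrier_mat (Suc n) (Suc n)"
  obtains e v where "v \<in> carrier_vec (Suc n)" "v \<bullet>c v = 1" "A *\<^sub>v v = e \<cdot>\<^sub>v v"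
proof -
  obtain es where es: "char_poly A = (\<Prod>a\<leftarrow>es. [:- a, 1:])" "length es = Suc n"
    using char_poly_factorized[OF A] by auto
  then obtain e es' where "es = e # es'" by (cases es) auto
  then have "eigenvalue A e" using es(1) eigenvalue_root_char_poly[OF A] by simp
  then have ev: "eigenvector A (find_eigenvector A e) e" by (rule find_eigenvector[OF A])
  define v where "v = normalize_vec (find_eigenvector A e)"
  have "v \<in> carrier_vec (Suc n)" "v \<bullet>c v = 1" "A *\<^sub>v v = e \<cdot>\<^sub>v v"
    using ev A normalize_vec_unit unfolding v_def eigenvector_def normalize_vec_def
    by (auto simp: mult_mat_vec smult_smult_assoc mult.commute)
  then show ?thesis by (rule that)
qed

lemma unitary_conj_block_diag:
  assumes W: "unitary (Suc n) W" and U: "unitary n U" and A: "A \<in> carrier_mat (Suc n) (Suc n)"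
    and E: "E \<in> carrier_mat 1 1" and A3: "A3 \<in> carrier_mat n n"
    and block: "mat_adjoint W * A * W = block_diag E A3"
  shows "mat_adjoint (W * block_diag (1\<^sub>m 1) U) * A * (W * block_diag (1\<^sub>m 1) U)
    = block_diag E (mat_adjoint U * A3 * U)"
proof -
  define U1 where "U1 = block_diag (1\<^sub>m 1) U"
  have U1: "U1 \<in> carrier_mat (Suc n) (Suc n)"
    unfolding U1_def using block_diag_carrier[OF one_carrier_mat[of 1] unitaryD(1)[OF U]] by simp
  have "mat_adjoint (W * U1) * A * (W * U1) = mat_adjoint U1 * (mat_adjoint W * A * W) * U1"
    using unitaryD(1)[OF W] U1 A
    by (simp add: mat_adjoint_mult[of _ "Suc n" "Suc n"] assoc_mult_mat[of _ "Suc n" "Suc n" _ "Suc n" _ "Suc n"]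
        mult_carrier_mat[of _ "Suc n" "Suc n" _ "Suc n"])
  also have "\<dots> = block_diag E (mat_adjoint U * A3 * U)"
    unfolding block U1_def mat_adjoint_block_diag using E A3 unitaryD(1)[OF U]
    by (simp add: block_diag_mult[of _ "Suc 0" "Suc 0" _ n n _ "Suc 0" _ n] mult_carrier_mat[of _ n n _ n])
  finally show ?thesis unfolding U1_def .
qed

theorem hermitian_unitary_diagonalization:
  fixes A :: "complex mat"
  assumes "A \<in> carrier_mat n n" "hermitian A"
  shows "\<exists>U D. unitary n U \<and> D \<in> carrier_mat n n \<and> diagonal_mat D \<and> mat_adjoint U * A * U = D"
  using assms
proof (induction n arbitrary: A)
  case 0
  then show ?case using unitary_one[of 0] by (auto simp: diagonal_mat_def)
next
  case (Suc n A)
  obtain e v where v: "v \<in> carrier_vec (Suc n)" "v \<bullet>c v = 1" and Av: "A *\<^sub>v v = e \<cdot>\<^sub>v v"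
    using complex_unit_eigenvector_exists[OF Suc.prems(1)] .
  obtain W where W: "unitary (Suc n) W" and Wv: "col W 0 = v"
    using unit_vec_extends_to_unitary[OF v] .
  define E where "E = mat 1 1 (\<lambda>_. e)"
  have E: "E \<in> carrier_mat 1 1" "diagonal_mat E" unfolding E_def diagonal_mat_def by auto
  have "A *\<^sub>v col W 0 = e \<cdot>\<^sub>v col W 0" using Av Wv by simp
  note col0 = unitary_conj_eigen_first_col[OF W Suc.prems(1) this]
  have "mat_adjoint W * A * W \<in> carrier_mat (Suc n) (Suc n)" using unitaryD(1)[OF W] Suc.prems(1) by auto
  with hermitian_first_col_block[OF hermitian_unitary_conj[OF Suc.prems(2,1) unitaryD(1)[OF W]] this col0]
  obtain A3 where A3: "A3 \<in> carrier_mat n n" "hermitian A3"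
    and block: "mat_adjoint W * A * W = block_diag E A3"
    unfolding E_def by blast
  obtain U3 D3 where U3: "unitary n U3" and D3: "D3 \<in> carrier_mat n n" "diagonal_mat D3"
    and diag3: "mat_adjoint U3 * A3 * U3 = D3"
    using Suc.IH[OF A3] by blast
  have "unitary (Suc n) (W * block_diag (1\<^sub>m 1) U3)"
    using unitary_mult[OF W] unitary_block_diag[OF unitary_one[of 1] U3] by simp
  then show ?case
    using unitary_conj_block_diag[OF W U3 Suc.prems(1) E(1) A3(1) block] diag3
      diagonal_mat_block_diag[OF E(1) D3(1) E(2) D3(2)] block_diag_carrier[OF E(1) D3(1)] by auto
qed

section \<open>Singular value decomposition\<close>

lemma cscalar_prod_eq_sum:
  "x \<in> carrier_vec n \<Longrightarrow> y \<in> carrier_vec n \<Longrightarrow> x \<bullet>c y = (\<Sum>k<n. x $ k * cnj (y $ k :: complex))"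
  by (simp add: scalar_prod_def lessThan_atLeast0)

lemma cscalar_prod_self_norm:
  "x \<in> carrier_vec n \<Longrightarrow> x \<bullet>c x = complex_of_real (\<Sum>k<n. (cmod (x $ k))\<^sup>2)"
  by (simp only: cscalar_prod_eq_sum of_real_sum complex_norm_square)

lemma char_poly_unitary_conj:
  assumes "unitary n U" "A \<in> carrier_mat n n"
  shows "char_poly (U * A * mat_adjoint U) = char_poly A"
proof -
  have "similar_mat_wit (U * A * mat_adjoint U) A U (mat_adjoint U)"
    by (rule similar_mat_witI[of _ _ n]) (use unitaryD[OF assms(1)] assms(2) in auto)
  then have "similar_mat (U * A * mat_adjoint U) A" unfolding similar_mat_def by blast
  then show ?thesis by (rule char_poly_similar)
qed

lemma proots_prod_linear_factors: "proots (\<Prod>a\<leftarrow>xs. [:- a, 1:]) = mset (xs :: complex list)"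
proof (induction xs)
  case (Cons a xs)
  have "monic (\<Prod>a\<leftarrow>xs. [:- a, 1:])" by (rule monic_prod_list) auto
  then have nz: "(\<Prod>a\<leftarrow>xs. [:- a, 1:]) \<noteq> 0" by auto
  show ?case using proots_mult[OF _ nz, of "[:- a, 1:]"] Cons by simp
qed simp

lemma singular_values_diagonalization:
  assumes W: "unitary N W" and D: "D \<in> carrier_mat N N" "diagonal_mat D"
    and B: "B \<in> carrier_mat N N" and diag: "mat_adjoint W * (mat_adjoint B * B) * W = D"
  shows "singular_values B = image_mset (\<lambda>i. sqrt (Re (D $$ (i,i)))) (mset_set {..<N})"
proof -
  note WD = unitaryD[OF W]
  have H: "mat_adjoint B * B \<in> carrier_mat N N" using B by (simp add: mult_carrier_mat[of _ N N _ N])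
  have "W * D * mat_adjoint W = mat_adjoint B * B"
    unfolding diag[symmetric] using WD H
    by (simp add: assoc_mult_mat[of _ N N _ N _ N] mult_carrier_mat[of _ N N _ N] right_mult_one_mat[OF H] unitary_mult_cancel(1)[OF W H])
  then have "char_poly (mat_adjoint B * B) = char_poly D"
    using char_poly_unitary_conj[OF W D(1)] by simp
  also have "\<dots> = (\<Prod>a\<leftarrow>diag_mat D. [:- a, 1:])"
    using D by (intro char_poly_upper_triangular) (auto simp: diagonal_mat_def upper_triangular_def)
  finally have "proots (char_poly (mat_adjoint B * B)) = mset (diag_mat D)"
    by (simp add: proots_prod_linear_factors)
  also have "mset (diag_mat D) = image_mset (\<lambda>i. D $$ (i,i)) (mset_set {..<N})"
    using D(1) by (simp add: diag_mat_def lessThan_atLeast0)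
  finally show ?thesis unfolding singular_values_def by (simp add: image_mset.compositionality comp_def)
qed

lemma of_real_sum_cmod_square:
  "complex_of_real (\<Sum>i\<in>A. (cmod (f i))\<^sup>2) = (\<Sum>i\<in>A. f i * cnj (f i))"
  by (simp only: of_real_sum complex_norm_square)

lemma bessel_inequality:
  fixes u :: "'i \<Rightarrow> complex vec"
  assumes I: "finite I" and u: "\<And>i. i \<in> I \<Longrightarrow> u i \<in> carrier_vec n"
    and orth: "\<And>i j. i \<in> I \<Longrightarrow> j \<in> I \<Longrightarrow> u i \<bullet>c u j = (if i = j then 1 else 0)"
    and x: "x \<in> carrier_vec n"
  shows "(\<Sum>i\<in>I. (cmod (x \<bullet>c u i))\<^sup>2) \<le> Re (x \<bullet>c x)"
proof -
  define a where "a i = x \<bullet>c u i" for i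
  define y where "y k = (\<Sum>i\<in>I. a i * u i $ k)" for k
  define S where "S = (\<Sum>i\<in>I. (cmod (a i))\<^sup>2)"
  have a: "a i = (\<Sum>k<n. x $ k * cnj (u i $ k))" if "i \<in> I" for i
    using cscalar_prod_eq_sum[OF x u[OF that]] by (simp add: a_def)
  have "(\<Sum>k<n. x $ k * cnj (y k)) = (\<Sum>i\<in>I. cnj (a i) * (\<Sum>k<n. x $ k * cnj (u i $ k)))"
    unfolding y_def by (simp add: sum_distrib_left sum.swap[of _ I] mult_ac)
  also have "\<dots> = complex_of_real S"
    unfolding S_def of_real_sum_cmod_square by (intro sum.cong refl) (simp add: mult.commute flip: a)
  finally have xy: "(\<Sum>k<n. x $ k * cnj (y k)) = complex_of_real S" .
  have yx: "(\<Sum>k<n. y k * cnj (x $ k)) = complex_of_real S"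
    using arg_cong[OF xy, of cnj] by (simp add: mult.commute)
  have "(\<Sum>k<n. y k * cnj (y k)) = (\<Sum>i\<in>I. \<Sum>j\<in>I. a i * cnj (a j) * (\<Sum>k<n. u i $ k * cnj (u j $ k)))"
    unfolding y_def cnj_sum sum_product
    by (simp add: sum_distrib_left sum.swap[of _ "{..<n}"] mult_ac)
  also have "\<dots> = (\<Sum>i\<in>I. \<Sum>j\<in>I. a i * cnj (a j) * (if i = j then 1 else 0))"
    by (intro sum.cong refl) (simp add: orth flip: cscalar_prod_eq_sum[OF u u])
  also have "\<dots> = complex_of_real S"
    unfolding S_def of_real_sum_cmod_square using I by (simp add: if_distrib[of "\<lambda>z. _ * z"] cong: if_cong)
  finally have yy: "(\<Sum>k<n. y k * cnj (y k)) = complex_of_real S" .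
  have "complex_of_real (\<Sum>k<n. (cmod (x $ k - y k))\<^sup>2) = x \<bullet>c x - complex_of_real S"
    unfolding of_real_sum_cmod_square using xy yx yy
    by (simp add: cscalar_prod_eq_sum[OF x x] algebra_simps sum.distrib sum_subtractf)
  then have "(\<Sum>k<n. (cmod (x $ k - y k))\<^sup>2) = Re (x \<bullet>c x) - S"
    by (metis Re_complex_of_real minus_complex.sel(1))
  moreover have "0 \<le> (\<Sum>k<n. (cmod (x $ k - y k))\<^sup>2)" by (simp add: sum_nonneg)
  ultimately show ?thesis unfolding S_def a_def by linarith
qed

lemma orthonormal_coord_square_sum_le_1:
  assumes "finite I" "\<And>i. i \<in> I \<Longrightarrow> u i \<in> carrier_vec n"
    "\<And>i j. i \<in> I \<Longrightarrow> j \<in> I \<Longrightarrow> u i \<bullet>c u j = (if i = j then 1 else 0)" "c < n"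
  shows "(\<Sum>i\<in>I. (cmod (u i $ c))\<^sup>2) \<le> 1"
proof -
  have "unit_vec n c \<bullet>c u i = cnj (u i $ c)" if "i \<in> I" for i
    using assms(2)[OF that] assms(4) by simp
  moreover have "unit_vec n c \<bullet>c unit_vec n c = (1 :: complex)"
    using assms(4) by simp
  ultimately show ?thesis
    using bessel_inequality[OF assms(1-3) unit_vec_carrier[of n c]] by simp
qed

lemma unitary_col_norm:
  assumes "unitary n U" "i < n"
  shows "(\<Sum>r<n. (cmod (U $$ (r,i)))\<^sup>2) = 1"
proof -
  have "complex_of_real (\<Sum>r<n. (cmod (U $$ (r,i)))\<^sup>2) = (mat_adjoint U * U) $$ (i,i)"
    unfolding of_real_sum_cmod_square using unitaryD(1)[OF assms(1)] assms(2)
    by (simp add: scalar_prod_def lessThan_atLeast0 mult.commute)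
  then show ?thesis using unitaryD(2)[OF assms(1)] assms(2) by (metis index_one_mat(1) of_real_eq_1_iff)
qed

lemma unitary_row_norm:
  assumes "unitary n U" "r < n"
  shows "(\<Sum>i<n. (cmod (U $$ (r,i)))\<^sup>2) = 1"
proof -
  have "complex_of_real (\<Sum>i<n. (cmod (U $$ (r,i)))\<^sup>2) = (U * mat_adjoint U) $$ (r,r)"
    unfolding of_real_sum_cmod_square using unitaryD(1)[OF assms(1)] assms(2)
    by (simp add: scalar_prod_def lessThan_atLeast0)
  then show ?thesis using unitaryD(3)[OF assms(1)] assms(2) by (metis index_one_mat(1) of_real_eq_1_iff)
qed

lemma mult_col_gram:
  fixes B W :: "complex mat"
  assumes B: "B \<in> carrier_mat N N" and W: "W \<in> carrier_mat N N"
    and diag: "mat_adjoint W * (mat_adjoint B * B) * W = D" and ij: "i < N" "j < N"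
  shows "(B *\<^sub>v col W j) \<bullet>c (B *\<^sub>v col W i) = D $$ (i,j)"
proof -
  have "mat_adjoint (B * W) * (B * W) = D"
    unfolding diag[symmetric] using B W
    by (simp add: mat_adjoint_mult[of _ N N _ N] assoc_mult_mat[of _ N N _ N _ N] mult_carrier_mat[of _ N N _ N])
  then show ?thesis
    using mat_adjoint_mult_self_index[of "B * W" N N i j] B W ij by (simp add: mult_mat_vec_def)
qed

locale svd =
  fixes N :: nat and B W :: "complex mat" and \<sigma> :: "nat \<Rightarrow> real" and u :: "nat \<Rightarrow> complex vec"
  assumes carrier: "B \<in> carrier_mat N N"
    and unitary: "unitary N W"
    and sigma_nonneg: "\<And>i. i < N \<Longrightarrow> 0 \<le> \<sigma> i"
    and singular_values_eq: "singular_values B = image_mset \<sigma> (mset_set {..<N})"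
    and u_carrier: "\<And>i. u i \<in> carrier_vec N"
    and mult_col: "\<And>i. i < N \<Longrightarrow> B *\<^sub>v col W i = complex_of_real (\<sigma> i) \<cdot>\<^sub>v u i"
    and orthonormal: "\<And>i j. i < N \<Longrightarrow> j < N \<Longrightarrow> 0 < \<sigma> i \<Longrightarrow> 0 < \<sigma> j \<Longrightarrow>
      u i \<bullet>c u j = (if i = j then 1 else 0)"

theorem svd_exists:
  fixes B :: "complex mat"
  assumes B: "B \<in> carrier_mat N N"
  shows "\<exists>W \<sigma> u. svd N B W \<sigma> u"
proof -
  have "mat_adjoint B * B \<in> carrier_mat N N" using B by (simp add: mult_carrier_mat[of _ N N _ N])
  moreover have "hermitian (mat_adjoint B * B)"
    using B by (simp add: hermitian_def mat_adjoint_mult[of _ N N _ N])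
  ultimately obtain W D where W: "unitary N W" and D: "D \<in> carrier_mat N N" "diagonal_mat D"
    and diag: "mat_adjoint W * (mat_adjoint B * B) * W = D"
    using hermitian_unitary_diagonalization by blast
  define v where "v i = B *\<^sub>v col W i" for i
  have v: "v i \<in> carrier_vec N" for i unfolding v_def using B by (simp add: carrier_vecI)
  note gram = mult_col_gram[OF B unitaryD(1)[OF W] diag, folded v_def]
  define \<sigma> where "\<sigma> i = sqrt (Re (D $$ (i,i)))" for i
  define u where "u i = complex_of_real (1 / \<sigma> i) \<cdot>\<^sub>v v i" for i
  have D_nonneg: "0 \<le> Re (D $$ (i,i))" if "i < N" for i
    using gram[OF that that] conjugate_square_ge_0_vec[of "v i"] by (simp add: less_eq_complex_def)
  have norm_v: "v i \<bullet>c v i = complex_of_real ((\<sigma> i)\<^sup>2)" if "i < N" for i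
    using D_nonneg[OF that] gram[OF that that] cscalar_prod_self_real[of "v i"] unfolding \<sigma>_def by simp
  have "svd N B W \<sigma> u"
  proof
    show "0 \<le> \<sigma> i" if "i < N" for i unfolding \<sigma>_def using D_nonneg[OF that] by simp
    show "singular_values B = image_mset \<sigma> (mset_set {..<N})"
      using singular_values_diagonalization[OF W D B diag] unfolding \<sigma>_def .
    show "u i \<in> carrier_vec N" for i unfolding u_def using v by simp
    show "B *\<^sub>v col W i = complex_of_real (\<sigma> i) \<cdot>\<^sub>v u i" if "i < N" for i
    proof (cases "\<sigma> i = 0")
      case True
      then have "v i = 0\<^sub>v N" using norm_v[OF that] conjugate_square_eq_0_vec[OF v] by simp
      then show ?thesis using True unfolding v_def u_def by (intro eq_vecI) auto
    qed (simp add: u_def v_def smult_smult_assoc)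
    show "u i \<bullet>c u j = (if i = j then 1 else 0)" if "i < N" "j < N" "0 < \<sigma> i" "0 < \<sigma> j" for i j
    proof -
      have "u i \<bullet>c u j = complex_of_real (1 / \<sigma> i * (1 / \<sigma> j)) * D $$ (j,i)"
        unfolding u_def cscalar_prod_smult[OF v v] gram[OF that(2,1)] by simp
      then show ?thesis
        using that D norm_v[OF that(1)] gram[OF that(1,1)] unfolding diagonal_mat_def
        by (auto simp: power2_eq_square)
    qed
  qed (use B W in auto)
  then show ?thesis by blast
qed

context svd
begin

definition supp :: "nat set" where
  "supp = {i. i < N \<and> 0 < \<sigma> i}"

lemma orthonormal_supp: "i \<in> supp \<Longrightarrow> j \<in> supp \<Longrightarrow> u i \<bullet>c u j = (if i = j then 1 else 0)"
  using orthonormal unfolding supp_def by blast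

lemma entry_expansion:
  assumes "a < N" "b < N"
  shows "B $$ (a,b) = (\<Sum>i<N. complex_of_real (\<sigma> i) * u i $ a * cnj (W $$ (b,i)))"
proof -
  note WD = unitaryD[OF unitary]
  have "B = B * W * mat_adjoint W"
    using carrier WD by (simp add: assoc_mult_mat[of _ N N _ N _ N])
  then have "B $$ (a,b) = (B * W * mat_adjoint W) $$ (a,b)" by simp
  also have "\<dots> = (\<Sum>i<N. (B * W) $$ (a,i) * cnj (W $$ (b,i)))"
    using carrier WD(1) assms by (simp add: scalar_prod_def lessThan_atLeast0)
  also have "\<dots> = (\<Sum>i<N. (B *\<^sub>v col W i) $ a * cnj (W $$ (b,i)))"
    using carrier WD(1) assms by (intro sum.cong refl) simp
  also have "\<dots> = (\<Sum>i<N. complex_of_real (\<sigma> i) * u i $ a * cnj (W $$ (b,i)))"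
    using assms by (intro sum.cong refl) (simp add: mult_col carrier_vecD[OF u_carrier])
  finally show ?thesis .
qed

lemma coord_square_sum_le_1: "a < N \<Longrightarrow> (\<Sum>i\<in>supp. (cmod (u i $ a))\<^sup>2) \<le> 1"
  using orthonormal_coord_square_sum_le_1[of supp u N a] orthonormal_supp u_carrier
  by (auto simp: supp_def)

lemma unit_norm: "i \<in> supp \<Longrightarrow> (\<Sum>k<N. (cmod (u i $ k))\<^sup>2) = 1"
proof -
  assume "i \<in> supp"
  then have "u i \<bullet>c u i = 1" using orthonormal_supp by simp
  then have "complex_of_real (\<Sum>k<N. (cmod (u i $ k))\<^sup>2) = 1"
    by (simp only: cscalar_prod_self_norm[OF u_carrier])
  then show ?thesis by (simp only: of_real_eq_1_iff)
qed

lemma trace_norm_eq: "trace_norm B = (\<Sum>i\<in>supp. \<sigma> i)"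
proof -
  have "(\<Sum>i\<in>supp. \<sigma> i) = (\<Sum>i<N. \<sigma> i)"
    using sigma_nonneg by (intro sum.mono_neutral_left) (auto simp: supp_def less_le)
  then show ?thesis unfolding trace_norm_def singular_values_eq by (simp add: sum_unfold_sum_mset)
qed

end

lemma sum_largest_threshold:
  fixes xs :: "real list" and k :: nat
  assumes sorted: "sorted xs" and nonneg: "\<forall>x\<in>set xs. 0 \<le> x"
  defines "t \<equiv> if k < length xs then xs ! (length xs - 1 - k) else 0"
  shows "sum_list (map (\<lambda>x. max (x - t) 0) xs) + t * real k = sum_list (take k (rev xs))" "0 \<le> t"
proof -
  let ?L = "length xs"
  show "0 \<le> t" unfolding t_def using nonneg nth_mem[of "?L - Suc k" xs] by auto
  show "sum_list (map (\<lambda>x. max (x - t) 0) xs) + t * real k = sum_list (take k (rev xs))"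
  proof (cases "k < ?L")
    case False
    then have "t = 0" unfolding t_def by simp
    moreover have "map (\<lambda>x. max (x - 0) 0) xs = xs" using nonneg by (induction xs) auto
    ultimately show ?thesis using False by simp
  next
    case True
    then have t: "t = xs ! (?L - 1 - k)" unfolding t_def by simp
    have low: "max (x - t) 0 = 0" if "x \<in> set (take (?L - k) xs)" for x
    proof -
      obtain p where "p < ?L - k" "x = xs ! p" using \<open>x \<in> set (take (?L - k) xs)\<close>
        by (auto simp: in_set_conv_nth)
      then show ?thesis unfolding t using sorted_nth_mono[OF sorted, of p "?L - 1 - k"] True by auto
    qed
    have high: "max (x - t) 0 = x - t" if "x \<in> set (drop (?L - k) xs)" for x
    proof -
      obtain p where "p < k" "x = xs ! (?L - k + p)" using \<open>x \<in> set (drop (?L - k) xs)\<close> True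
        by (auto simp: in_set_conv_nth)
      moreover have "?L - k + p < ?L" using \<open>p < k\<close> True by linarith
      ultimately show ?thesis unfolding t using sorted_nth_mono[OF sorted, of "?L - 1 - k" "?L - k + p"] by auto
    qed
    have "sum_list (map (\<lambda>x. max (x - t) 0) xs)
        = sum_list (map (\<lambda>x. max (x - t) 0) (take (?L - k) xs))
          + sum_list (map (\<lambda>x. max (x - t) 0) (drop (?L - k) xs))"
      by (simp flip: sum_list_append map_append)
    also have "\<dots> = sum_list (map (\<lambda>x. x - t) (drop (?L - k) xs))"
      using low high by (simp add: map_idI cong: map_cong)
    also have "\<dots> = sum_list (drop (?L - k) xs) - t * real k"
      using True by (simp add: sum_list_subtractf sum_list_triv)
    finally show ?thesis by (simp add: take_rev)
  qed
qed

lemma weighted_sum_le_sum_largest: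
  fixes \<sigma> m :: "'i \<Rightarrow> real"
  assumes I: "finite I" and \<sigma>: "\<And>i. i \<in> I \<Longrightarrow> 0 \<le> \<sigma> i"
    and m: "\<And>i. i \<in> I \<Longrightarrow> 0 \<le> m i \<and> m i \<le> 1" and m_sum: "sum m I \<le> real k"
  shows "(\<Sum>i\<in>I. \<sigma> i * m i) \<le> sum_list (take k (rev (sorted_list_of_multiset (image_mset \<sigma> (mset_set I)))))"
proof -
  define xs where "xs = sorted_list_of_multiset (image_mset \<sigma> (mset_set I))"
  have "\<forall>x\<in>set xs. 0 \<le> x" unfolding xs_def using I \<sigma> by auto
  from sum_largest_threshold[OF _ this, of k] obtain t
    where t: "sum_list (map (\<lambda>x. max (x - t) 0) xs) + t * real k = sum_list (take k (rev xs))" "0 \<le> t"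
    unfolding xs_def by auto
  have pointwise: "\<sigma> i * m i \<le> max (\<sigma> i - t) 0 + t * m i" if "i \<in> I" for i
  proof (cases "t \<le> \<sigma> i")
    case True
    then have "(\<sigma> i - t) * m i \<le> \<sigma> i - t" using m[OF that] by (simp add: mult_left_le)
    then show ?thesis using True by (simp add: algebra_simps)
  next
    case False
    then show ?thesis using m[OF that] by (simp add: mult_right_mono)
  qed
  have "(\<Sum>i\<in>I. \<sigma> i * m i) \<le> (\<Sum>i\<in>I. max (\<sigma> i - t) 0 + t * m i)"
    using pointwise by (rule sum_mono)
  also have "\<dots> = (\<Sum>i\<in>I. max (\<sigma> i - t) 0) + t * sum m I"
    by (simp add: sum.distrib sum_distrib_left)
  also have "t * sum m I \<le> t * real k" using t(2) m_sum by (simp add: mult_left_mono)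
  also have "(\<Sum>i\<in>I. max (\<sigma> i - t) 0) = sum_list (map (\<lambda>x. max (x - t) 0) xs)"
  proof -
    have "sum_list (map (\<lambda>x. max (x - t) 0) xs) = sum_mset (image_mset (\<lambda>x. max (x - t) 0) (mset xs))"
      by (metis mset_map sum_mset_sum_list)
    then show ?thesis
      unfolding xs_def by (simp add: sum_unfold_sum_mset image_mset.compositionality comp_def)
  qed
  finally show ?thesis using t(1) unfolding xs_def by simp
qed

section \<open>Ky Fan norms and the trace norm\<close>

lemma sum_reindex_inj_le:
  fixes f :: "nat \<Rightarrow> real"
  assumes "finite S" "inj_on g S" "\<And>s. s \<in> S \<Longrightarrow> g s < n" "\<And>c. 0 \<le> f c"
  shows "(\<Sum>s\<in>S. f (g s)) \<le> (\<Sum>c<n. f c)"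
proof -
  have "(\<Sum>s\<in>S. f (g s)) = (\<Sum>c\<in>g ` S. f c)" using sum.reindex[OF assms(2), of f] by simp
  also have "\<dots> \<le> (\<Sum>c<n. f c)" using assms by (intro sum_mono2) auto
  finally show ?thesis .
qed

lemma product_le_mean_of_squares: "(x :: real) * y \<le> (x\<^sup>2 + y\<^sup>2) / 2"
  using sum_squares_bound[of x y] by simp

context svd
begin

definition weight :: "'s set \<Rightarrow> ('s \<Rightarrow> nat) \<Rightarrow> ('s \<Rightarrow> nat) \<Rightarrow> nat \<Rightarrow> real" where
  "weight S r c i =
    (if i \<in> supp then ((\<Sum>s\<in>S. (cmod (u i $ r s))\<^sup>2) + (\<Sum>s\<in>S. (cmod (W $$ (c s, i)))\<^sup>2)) / 2 else 0)"

lemma cmod_sum_entries_le_weighted: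
  assumes range: "\<And>s. s \<in> S \<Longrightarrow> r s < N \<and> c s < N" and z: "\<And>s. s \<in> S \<Longrightarrow> cmod (z s) \<le> 1"
  shows "cmod (\<Sum>s\<in>S. z s * B $$ (r s, c s)) \<le> (\<Sum>i<N. \<sigma> i * weight S r c i)"
proof -
  have "cmod (z s * B $$ (r s, c s)) \<le> (\<Sum>i<N. \<sigma> i * (cmod (u i $ r s) * cmod (W $$ (c s, i))))"
    if "s \<in> S" for s
  proof -
    have "cmod (z s * B $$ (r s, c s)) \<le> cmod (B $$ (r s, c s))"
      using z[OF that] by (simp add: norm_mult mult_left_le_one_le)
    also have "\<dots> \<le> (\<Sum>i<N. cmod (complex_of_real (\<sigma> i) * u i $ r s * cnj (W $$ (c s, i))))"
      using entry_expansion range[OF that] by (simp add: norm_sum)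
    finally show ?thesis using sigma_nonneg by (simp add: norm_mult mult.assoc)
  qed
  then have "cmod (\<Sum>s\<in>S. z s * B $$ (r s, c s))
      \<le> (\<Sum>s\<in>S. \<Sum>i<N. \<sigma> i * (cmod (u i $ r s) * cmod (W $$ (c s, i))))"
    by (intro order_trans[OF norm_sum sum_mono])
  also have "\<dots> = (\<Sum>i<N. \<sigma> i * (\<Sum>s\<in>S. cmod (u i $ r s) * cmod (W $$ (c s, i))))"
    by (simp add: sum.swap[of _ S] sum_distrib_left)
  also have "\<dots> \<le> (\<Sum>i<N. \<sigma> i * weight S r c i)"
  proof (rule sum_mono)
    fix i assume i: "i \<in> {..<N}"
    show "\<sigma> i * (\<Sum>s\<in>S. cmod (u i $ r s) * cmod (W $$ (c s, i))) \<le> \<sigma> i * weight S r c i"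
    proof (cases "i \<in> supp")
      case True
      have "(\<Sum>s\<in>S. cmod (u i $ r s) * cmod (W $$ (c s, i)))
          \<le> (\<Sum>s\<in>S. ((cmod (u i $ r s))\<^sup>2 + (cmod (W $$ (c s, i)))\<^sup>2) / 2)"
        by (intro sum_mono product_le_mean_of_squares)
      also have "\<dots> = weight S r c i"
        using True unfolding weight_def by (simp add: sum.distrib flip: sum_divide_distrib)
      finally show ?thesis using sigma_nonneg i by (simp add: mult_left_mono)
    qed (use i sigma_nonneg[of i] in \<open>auto simp: supp_def\<close>)
  qed
  finally show ?thesis .
qed

lemma weight_bounds:
  assumes S: "finite S" and inj: "inj_on r S" "inj_on c S"
    and range: "\<And>s. s \<in> S \<Longrightarrow> r s < N \<and> c s < N" and i: "i < N"
  shows "0 \<le> weight S r c i \<and> weight S r c i \<le> 1"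
proof -
  have "(\<Sum>s\<in>S. (cmod (u i $ r s))\<^sup>2) \<le> 1" if "i \<in> supp"
    using sum_reindex_inj_le[OF S inj(1), of N "\<lambda>k. (cmod (u i $ k))\<^sup>2"] range unit_norm[OF that] by auto
  moreover have "(\<Sum>s\<in>S. (cmod (W $$ (c s, i)))\<^sup>2) \<le> 1"
    using sum_reindex_inj_le[OF S inj(2), of N "\<lambda>k. (cmod (W $$ (k, i)))\<^sup>2"] range unitary_col_norm[OF unitary i]
    by auto
  ultimately show ?thesis unfolding weight_def by (auto simp: sum_nonneg)
qed

lemma sum_weight_le_card:
  assumes range: "\<And>s. s \<in> S \<Longrightarrow> r s < N \<and> c s < N"
  shows "(\<Sum>i<N. weight S r c i) \<le> real (card S)"
proof -
  have "(\<Sum>i\<in>supp. \<Sum>s\<in>S. (cmod (u i $ r s))\<^sup>2) \<le> real (card S)"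
  proof -
    have "(\<Sum>i\<in>supp. \<Sum>s\<in>S. (cmod (u i $ r s))\<^sup>2) = (\<Sum>s\<in>S. \<Sum>i\<in>supp. (cmod (u i $ r s))\<^sup>2)"
      by (rule sum.swap)
    also have "\<dots> \<le> (\<Sum>s\<in>S. 1)" using coord_square_sum_le_1 range by (intro sum_mono) auto
    finally show ?thesis by simp
  qed
  moreover have "(\<Sum>i\<in>supp. \<Sum>s\<in>S. (cmod (W $$ (c s, i)))\<^sup>2) \<le> real (card S)"
  proof -
    have "(\<Sum>i\<in>supp. \<Sum>s\<in>S. (cmod (W $$ (c s, i)))\<^sup>2) \<le> (\<Sum>i<N. \<Sum>s\<in>S. (cmod (W $$ (c s, i)))\<^sup>2)"
      by (intro sum_mono2) (auto simp: supp_def sum_nonneg)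
    also have "\<dots> = (\<Sum>s\<in>S. \<Sum>i<N. (cmod (W $$ (c s, i)))\<^sup>2)" by (rule sum.swap)
    also have "\<dots> = (\<Sum>s\<in>S. 1)" using unitary_row_norm[OF unitary] range by (intro sum.cong) auto
    finally show ?thesis by simp
  qed
  moreover have "(\<Sum>i<N. weight S r c i)
      = ((\<Sum>i\<in>supp. \<Sum>s\<in>S. (cmod (u i $ r s))\<^sup>2) + (\<Sum>i\<in>supp. \<Sum>s\<in>S. (cmod (W $$ (c s, i)))\<^sup>2)) / 2"
    unfolding weight_def supp_def
    by (simp add: sum.If_cases Int_def conj_commute sum.distrib flip: sum_divide_distrib)
  ultimately show ?thesis by simp
qed

(* The partial isometry sum_(i in supp) w_i u_i^H of the polar decomposition of B (w_i the columns of W). *)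

definition dual_contraction :: "nat \<Rightarrow> nat \<Rightarrow> complex" where
  "dual_contraction b a = (\<Sum>i\<in>supp. W $$ (b,i) * cnj (u i $ a))"

lemma cmod_dual_contraction_le_1:
  assumes "a < N" "b < N"
  shows "cmod (dual_contraction b a) \<le> 1"
proof -
  have "cmod (dual_contraction b a) \<le> (\<Sum>i\<in>supp. cmod (W $$ (b,i)) * cmod (u i $ a))"
    unfolding dual_contraction_def by (rule order_trans[OF norm_sum]) (simp add: norm_mult)
  also have "\<dots> \<le> (\<Sum>i\<in>supp. ((cmod (W $$ (b,i)))\<^sup>2 + (cmod (u i $ a))\<^sup>2) / 2)"
    by (intro sum_mono product_le_mean_of_squares)
  also have "\<dots> = ((\<Sum>i\<in>supp. (cmod (W $$ (b,i)))\<^sup>2) + (\<Sum>i\<in>supp. (cmod (u i $ a))\<^sup>2)) / 2"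
    by (simp add: sum.distrib flip: sum_divide_distrib)
  also have "(\<Sum>i\<in>supp. (cmod (W $$ (b,i)))\<^sup>2) \<le> (\<Sum>i<N. (cmod (W $$ (b,i)))\<^sup>2)"
    by (intro sum_mono2) (auto simp: supp_def)
  also have "\<dots> = 1" using unitary_row_norm[OF unitary \<open>b < N\<close>] .
  also have "(\<Sum>i\<in>supp. (cmod (u i $ a))\<^sup>2) \<le> 1" using coord_square_sum_le_1[OF \<open>a < N\<close>] .
  finally show ?thesis by simp
qed

lemma dual_contraction_pairing:
  "(\<Sum>a<N. \<Sum>b<N. dual_contraction b a * B $$ (a,b)) = complex_of_real (trace_norm B)"
proof -
  have "(\<Sum>a<N. \<Sum>b<N. dual_contraction b a * B $$ (a,b))
      = (\<Sum>i\<in>supp. \<Sum>a<N. cnj (u i $ a) * (\<Sum>b<N. B $$ (a,b) * W $$ (b,i)))"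
    unfolding dual_contraction_def by (simp add: sum_distrib_left sum_distrib_right sum.swap[of _ supp] mult_ac)
  also have "\<dots> = (\<Sum>i\<in>supp. complex_of_real (\<sigma> i) * (u i \<bullet>c u i))"
  proof (intro sum.cong refl)
    fix i assume "i \<in> supp"
    then have "(\<Sum>b<N. B $$ (a,b) * W $$ (b,i)) = complex_of_real (\<sigma> i) * u i $ a" if "a < N" for a
      using arg_cong[OF mult_col[of i], of "\<lambda>v. v $ a"] carrier unitaryD(1)[OF unitary] that
      by (simp add: supp_def scalar_prod_def lessThan_atLeast0 carrier_vecD[OF u_carrier])
    then show "(\<Sum>a<N. cnj (u i $ a) * (\<Sum>b<N. B $$ (a,b) * W $$ (b,i)))
        = complex_of_real (\<sigma> i) * (u i \<bullet>c u i)"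
      by (simp add: cscalar_prod_eq_sum[OF u_carrier u_carrier] sum_distrib_left mult_ac)
  qed
  also have "\<dots> = complex_of_real (trace_norm B)"
    unfolding trace_norm_eq using orthonormal_supp by (simp flip: of_real_sum)
  finally show ?thesis .
qed

end

theorem cmod_sum_entries_le_ky_fan_norm:
  fixes B :: "complex mat" and S :: "'s set" and r c :: "'s \<Rightarrow> nat" and z :: "'s \<Rightarrow> complex"
  assumes B: "B \<in> carrier_mat N N" and S: "finite S" "card S \<le> k"
    and inj: "inj_on r S" "inj_on c S" and range: "\<And>s. s \<in> S \<Longrightarrow> r s < N \<and> c s < N"
    and z: "\<And>s. s \<in> S \<Longrightarrow> cmod (z s) \<le> 1"
  shows "cmod (\<Sum>s\<in>S. z s * B $$ (r s, c s)) \<le> ky_fan_norm k B"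
proof -
  obtain W \<sigma> u where "svd N B W \<sigma> u" using svd_exists[OF B] by blast
  then interpret svd N B W \<sigma> u .
  have "cmod (\<Sum>s\<in>S. z s * B $$ (r s, c s)) \<le> (\<Sum>i<N. \<sigma> i * weight S r c i)"
    using cmod_sum_entries_le_weighted[OF range z] .
  also have "\<dots> \<le> ky_fan_norm k B"
    unfolding ky_fan_norm_def singular_values_eq
  proof (rule weighted_sum_le_sum_largest)
    show "sum (weight S r c) {..<N} \<le> real k" using sum_weight_le_card[of S r c, OF range] S(2) by simp
  qed (use sigma_nonneg weight_bounds[OF S(1) inj range] in auto)
  finally show ?thesis .
qed

theorem trace_norm_dual_witness:
  fixes B :: "complex mat"
  assumes B: "B \<in> carrier_mat N N"
  obtains T where "\<And>a b. a < N \<Longrightarrow> b < N \<Longrightarrow> cmod (T b a) \<le> 1"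
    "(\<Sum>a<N. \<Sum>b<N. T b a * B $$ (a,b)) = complex_of_real (trace_norm B)"
proof -
  obtain W \<sigma> u where "svd N B W \<sigma> u" using svd_exists[OF B] by blast
  then interpret svd N B W \<sigma> u .
  show ?thesis using that[OF cmod_dual_contraction_le_1 dual_contraction_pairing] .
qed

section \<open>Block structure with respect to a diagonal matrix\<close>

lemma commute_mat_diag_entry:
  fixes A :: "'a :: idom mat"
  assumes A: "A \<in> carrier_mat n n" and comm: "A * mat_diag n f = mat_diag n f * A"
    and ab: "a < n" "b < n" "f a \<noteq> f b"
  shows "A $$ (a,b) = 0"
proof -
  have "A $$ (a,b) * f b = f a * A $$ (a,b)"
    using arg_cong[OF comm, of "\<lambda>M. M $$ (a,b)"] A ab
    by (simp add: mat_diag_mult_left[OF A] mat_diag_mult_right[OF A])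
  then have "A $$ (a,b) * (f b - f a) = 0" by (simp add: algebra_simps)
  then show ?thesis using ab(3) by simp
qed

lemma block_commute_mat_diag:
  fixes A :: "'a :: comm_ring_1 mat"
  assumes A: "A \<in> carrier_mat n n"
    and block: "\<And>a b. a < n \<Longrightarrow> b < n \<Longrightarrow> f a \<noteq> f b \<Longrightarrow> A $$ (a,b) = 0"
  shows "A * mat_diag n (\<lambda>i. h (f i)) = mat_diag n (\<lambda>i. h (f i)) * A"
proof (rule eq_matI)
  fix a b assume "a < dim_row (mat_diag n (\<lambda>i. h (f i)) * A)" "b < dim_col (mat_diag n (\<lambda>i. h (f i)) * A)"
  then have ab: "a < n" "b < n" using A carrier_matD[OF mat_diag_dim[of n "\<lambda>i. h (f i)"]] by auto
  then show "(A * mat_diag n (\<lambda>i. h (f i))) $$ (a,b) = (mat_diag n (\<lambda>i. h (f i)) * A) $$ (a,b)"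
    using block[OF ab] by (cases "f a = f b") (simp_all add: mat_diag_mult_left[OF A] mat_diag_mult_right[OF A])
qed (use A carrier_matD[OF mat_diag_dim[of n "\<lambda>i. h (f i)"]] in auto)

lemma mat_diag_sandwich_index:
  assumes "Z \<in> carrier_mat n n" "a < n" "b < n"
  shows "(mat_diag n f * Z * mat_diag n g) $$ (a,b) = f a * Z $$ (a,b) * g b"
  using assms by (simp add: mat_diag_mult_left mat_diag_mult_right[of _ n n])

lemma L_AB_mat_diag: "L_AB d = mat_diag (d*d) (\<lambda>i. of_nat (Lval d i))"
  unfolding L_AB_def mat_diag_def by (rule eq_matI) auto

lemma Pi_proj_mat_diag: "Pi_proj d c = mat_diag (d*d) (\<lambda>i. if Lval d i = c then 1 else 0)"
  unfolding Pi_proj_def mat_diag_def by (rule eq_matI) auto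

lemma Pi_proj_sandwich_index:
  assumes "Z \<in> carrier_mat (d*d) (d*d)" "a < d*d" "b < d*d"
  shows "(Pi_proj d c' * Z * Pi_proj d c) $$ (a,b) = (if Lval d a = c' \<and> Lval d b = c then Z $$ (a,b) else 0)"
  unfolding Pi_proj_mat_diag using mat_diag_sandwich_index[OF assms] by simp

lemma Pi_proj_carrier [simp]: "Pi_proj d c \<in> carrier_mat (d*d) (d*d)"
  unfolding Pi_proj_def by simp

lemma Pi_proj_sandwich_bmode:
  assumes X: "X \<in> carrier_mat (d*d) (d*d)"
  shows "Pi_proj d (c+j) * bmode d j X * Pi_proj d c = Pi_proj d (c+j) * X * Pi_proj d c"
proof -
  have bX: "bmode d j X \<in> carrier_mat (d*d) (d*d)" unfolding bmode_def by simp
  show ?thesis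
  proof (rule eq_matI)
    fix a b assume "a < dim_row (Pi_proj d (c+j) * X * Pi_proj d c)" "b < dim_col (Pi_proj d (c+j) * X * Pi_proj d c)"
    then have ab: "a < d*d" "b < d*d" using carrier_matD[OF Pi_proj_carrier] by auto
    show "(Pi_proj d (c+j) * bmode d j X * Pi_proj d c) $$ (a,b) = (Pi_proj d (c+j) * X * Pi_proj d c) $$ (a,b)"
      unfolding Pi_proj_sandwich_index[OF X ab] Pi_proj_sandwich_index[OF bX ab] using ab by (simp add: bmode_def)
  qed (use carrier_matD[OF Pi_proj_carrier] in auto)
qed

lemma L_AB_commuting_block:
  assumes V: "V \<in> carrier_mat (d*d) (d*d)" and comm: "V * L_AB d = L_AB d * V"
    and ab: "a < d*d" "b < d*d" "Lval d a \<noteq> Lval d b"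
  shows "V $$ (a,b) = 0"
  using commute_mat_diag_entry[OF V comm[unfolded L_AB_mat_diag] ab(1,2)] ab(3) by simp

lemma singular_values_unitary_conj:
  assumes V: "unitary n V" and M: "M \<in> carrier_mat n n"
  shows "singular_values (V * M * mat_adjoint V) = singular_values M"
proof -
  note VD = unitaryD[OF V]
  have "mat_adjoint (V * M * mat_adjoint V) * (V * M * mat_adjoint V) = V * (mat_adjoint M * M) * mat_adjoint V"
    using VD M
    by (simp add: mat_adjoint_mult[of _ n n _ n] assoc_mult_mat[of _ n n _ n _ n] mult_carrier_mat[of _ n n _ n]
        unitary_mult_cancel(2)[OF V mult_carrier_mat[OF M mat_adjoint_carrier[OF VD(1)]]])
  then show ?thesis
    unfolding singular_values_def using char_poly_unitary_conj[OF V] M by (simp add: mult_carrier_mat[of _ n n _ n])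
qed

lemma ky_fan_norm_Pi_proj_sandwich_conj:
  assumes V: "unitary (d*d) V" and comm: "V * L_AB d = L_AB d * V" and X: "X \<in> carrier_mat (d*d) (d*d)"
  shows "ky_fan_norm k (Pi_proj d c' * (V * X * mat_adjoint V) * Pi_proj d c)
    = ky_fan_norm k (Pi_proj d c' * X * Pi_proj d c)"
proof -
  let ?N = "d*d"
  note VD = unitaryD[OF V]
  have "V * Pi_proj d c'' = Pi_proj d c'' * V" for c''
    unfolding Pi_proj_mat_diag using L_AB_commuting_block[OF VD(1) comm] VD(1)
    by (intro block_commute_mat_diag[where f = "Lval d"]) auto
  moreover have "mat_adjoint V * Pi_proj d c'' = Pi_proj d c'' * mat_adjoint V" for c''
    unfolding Pi_proj_mat_diag using L_AB_commuting_block[OF VD(1) comm] VD(1)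
    by (intro block_commute_mat_diag[where f = "Lval d"]) auto
  ultimately have "Pi_proj d c' * (V * X * mat_adjoint V) * Pi_proj d c
      = V * (Pi_proj d c' * X * Pi_proj d c) * mat_adjoint V"
    using VD(1) X by (simp add: assoc_mult_mat[of _ ?N ?N _ ?N _ ?N] mult_carrier_mat[of _ ?N ?N _ ?N]
        flip: assoc_mult_mat[of V ?N ?N "Pi_proj d c'" ?N _ ?N])
  moreover have "Pi_proj d c' * X * Pi_proj d c \<in> carrier_mat ?N ?N"
    using X by (meson Pi_proj_carrier mult_carrier_mat)
  ultimately show ?thesis
    unfolding ky_fan_norm_def using singular_values_unitary_conj[OF V] by simp
qed

lemma shifted_pair_index:
  assumes "n + j < d" "m < d"
  shows "(n + j) * d + m < d * d" "Lval d ((n + j) * d + m) = n + j + m"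
proof -
  have "(n + j) * d + m < (n + j + 1) * d" using assms(2) by simp
  also have "\<dots> \<le> d * d" using assms(1) by (intro mult_right_mono) auto
  finally show "(n + j) * d + m < d * d" .
  show "Lval d ((n + j) * d + m) = n + j + m" unfolding Lval_def using assms(2) by simp
qed

lemma shifted_pair_index_inj_on: "inj_on (\<lambda>(n,m). (n + j) * d + m) {(n,m). m < (d :: nat)}"
proof (rule inj_onI)
  fix p q :: "nat \<times> nat"
  assume "p \<in> {(n,m). m < d}" "q \<in> {(n,m). m < d}" "(case p of (n,m) \<Rightarrow> (n + j) * d + m) = (case q of (n,m) \<Rightarrow> (n + j) * d + m)"
  moreover obtain n m n' m' where "p = (n,m)" "q = (n',m')" by (cases p, cases q)
  ultimately have "m < d" "m' < d" "(n + j) * d + m = (n' + j) * d + m'" by auto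
  then have "((n + j) * d + m) div d = ((n' + j) * d + m') div d \<and> ((n + j) * d + m) mod d = ((n' + j) * d + m') mod d"
    by simp
  then show "p = q" using \<open>p = (n,m)\<close> \<open>q = (n',m')\<close> \<open>m < d\<close> \<open>m' < d\<close> by simp
qed

lemma sum_smode_ptrace_B_entries:
  fixes T :: "nat \<Rightarrow> nat \<Rightarrow> complex"
  shows "(\<Sum>a<d. \<Sum>b<d. T b a * smode d j (ptrace_B d Y) $$ (a,b))
    = (\<Sum>(n,m)\<in>{n. n + j < d} \<times> {..<d}. T n (n+j) * Y $$ ((n+j)*d + m, n*d + m))"
proof -
  have "(\<Sum>a<d. \<Sum>b<d. T b a * smode d j (ptrace_B d Y) $$ (a,b))
      = (\<Sum>b<d. \<Sum>a<d. if a = b + j then T b a * ptrace_B d Y $$ (a,b) else 0)"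
    by (subst sum.swap) (intro sum.cong refl, simp add: smode_def)
  also have "\<dots> = (\<Sum>n\<in>{n. n + j < d}. T n (n+j) * ptrace_B d Y $$ (n+j, n))"
    by (simp add: sum.If_cases lessThan_def) (intro sum.cong, auto)
  also have "\<dots> = (\<Sum>n\<in>{n. n + j < d}. \<Sum>m<d. T n (n+j) * Y $$ ((n+j)*d + m, n*d + m))"
    by (intro sum.cong refl) (simp add: ptrace_B_def sum_distrib_left)
  finally show ?thesis by (simp add: sum.cartesian_product)
qed

lemma sum_group_by_excitation:
  "sum f ({n. n + j < d} \<times> {..<d})
    = (\<Sum>c = 0..2*d-2-j. sum f {(n,m). n + j < d \<and> m < (d :: nat) \<and> n + m = c})"
proof -
  define Q where "Q = {n. n + j < d} \<times> {..<d}"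
  have "finite {n. n + j < d}" by (rule finite_subset[of _ "{..<d}"]) auto
  then have "finite Q" unfolding Q_def by simp
  moreover have "(\<lambda>(n,m). n + m) ` Q \<subseteq> {0..2*d-2-j}" unfolding Q_def by auto
  moreover have "{q \<in> Q. (case q of (n,m) \<Rightarrow> n + m) = c} = {(n,m). n + j < d \<and> m < d \<and> n + m = c}" for c
    unfolding Q_def by auto
  ultimately show ?thesis using sum.group[of Q "{0..2*d-2-j}" "\<lambda>(n,m). n + m" f] unfolding Q_def by simp
qed

lemma block_sum_le_ky_fan_norm:
  fixes z :: "nat \<times> nat \<Rightarrow> complex"
  assumes Y: "Y \<in> carrier_mat (d*d) (d*d)" and z: "\<And>q. cmod (z q) \<le> 1"
  shows "cmod (\<Sum>(n,m)\<in>{(n,m). n + j < d \<and> m < d \<and> n + m = c}. z (n,m) * Y $$ ((n+j)*d + m, n*d + m))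
    \<le> ky_fan_norm (dim_in d j c) (Pi_proj d (c+j) * Y * Pi_proj d c)"
proof -
  define S where "S = {(n,m). n + j < d \<and> m < d \<and> n + m = c}"
  define r :: "nat \<times> nat \<Rightarrow> nat" where "r = (\<lambda>(n,m). (n + j) * d + m)"
  define k :: "nat \<times> nat \<Rightarrow> nat" where "k = (\<lambda>(n,m). n * d + m)"
  have S_fin: "finite S" unfolding S_def by (rule finite_subset[of _ "{..<d} \<times> {..<d}"]) auto
  have S_sub: "S \<subseteq> {(n,m). m < d}" unfolding S_def by auto
  have inj: "inj_on r S" "inj_on k S"
    using inj_on_subset[OF shifted_pair_index_inj_on S_sub] inj_on_subset[OF shifted_pair_index_inj_on[of 0] S_sub]
    unfolding r_def k_def by simp_all
  have index: "r q < d*d \<and> k q < d*d \<and> Lval d (r q) = c + j \<and> Lval d (k q) = c" if "q \<in> S" for q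
  proof -
    obtain n m where "q = (n,m)" "n + j < d" "m < d" "n + m = c" using \<open>q \<in> S\<close> unfolding S_def by (cases q) auto
    then show ?thesis using shifted_pair_index[of n j d m] shifted_pair_index[of n 0 d m] unfolding r_def k_def by auto
  qed
  have PYP: "Pi_proj d (c+j) * Y * Pi_proj d c \<in> carrier_mat (d*d) (d*d)"
    using Y by (meson Pi_proj_carrier mult_carrier_mat)
  have "(\<Sum>(n,m)\<in>S. z (n,m) * Y $$ ((n+j)*d + m, n*d + m))
      = (\<Sum>q\<in>S. z q * (Pi_proj d (c+j) * Y * Pi_proj d c) $$ (r q, k q))"
  proof (intro sum.cong refl)
    fix q assume "q \<in> S"
    then show "(case q of (n,m) \<Rightarrow> z (n,m) * Y $$ ((n+j)*d + m, n*d + m))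
        = z q * (Pi_proj d (c+j) * Y * Pi_proj d c) $$ (r q, k q)"
      using index[OF \<open>q \<in> S\<close>] Pi_proj_sandwich_index[OF Y, of "r q" "k q"] unfolding r_def k_def
      by (cases q) simp
  qed
  then show ?thesis
    using cmod_sum_entries_le_ky_fan_norm[OF PYP S_fin _ inj _ z, of "dim_in d j c"] index
    unfolding S_def dim_in_def by simp
qed

theorem trace_norm_smode_ptrace_le_sum_ky_fan_norm:
  assumes X: "X \<in> carrier_mat (d*d) (d*d)" and V: "unitary (d*d) V" and comm: "V * L_AB d = L_AB d * V"
  shows "trace_norm (smode d j (ptrace_B d (V * X * mat_adjoint V)))
    \<le> (\<Sum>c = 0..2*d-2-j. ky_fan_norm (dim_in d j c) (Pi_proj d (c+j) * bmode d j X * Pi_proj d c))"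
proof -
  define Y where "Y = V * X * mat_adjoint V"
  have Y: "Y \<in> carrier_mat (d*d) (d*d)" unfolding Y_def using unitaryD(1)[OF V] X by auto
  define A where "A = smode d j (ptrace_B d Y)"
  have "A \<in> carrier_mat d d" unfolding A_def smode_def by simp
  then obtain T where T: "\<And>a b. a < d \<Longrightarrow> b < d \<Longrightarrow> cmod (T b a) \<le> 1"
    and dual: "(\<Sum>a<d. \<Sum>b<d. T b a * A $$ (a,b)) = complex_of_real (trace_norm A)"
    using trace_norm_dual_witness by blast
  define z where "z q = (if fst q + j < d then T (fst q) (fst q + j) else 0)" for q :: "nat \<times> nat"
  have z: "cmod (z q) \<le> 1" for q unfolding z_def using T by simp
  define f where "f = (\<lambda>(n,m). z (n,m) * Y $$ ((n+j)*d + m, n*d + m))"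
  define S where "S c = {(n,m). n + j < d \<and> m < d \<and> n + m = c}" for c
  have "complex_of_real (trace_norm A) = (\<Sum>a<d. \<Sum>b<d. T b a * A $$ (a,b))" using dual by simp
  also have "\<dots> = sum f ({n. n + j < d} \<times> {..<d})"
    unfolding A_def sum_smode_ptrace_B_entries f_def z_def by (intro sum.cong refl) auto
  also have "\<dots> = (\<Sum>c = 0..2*d-2-j. sum f (S c))"
    unfolding S_def by (rule sum_group_by_excitation)
  finally have "trace_norm A \<le> cmod (\<Sum>c = 0..2*d-2-j. sum f (S c))"
    by (metis Re_complex_of_real complex_Re_le_cmod)
  also have "\<dots> \<le> (\<Sum>c = 0..2*d-2-j. cmod (sum f (S c)))" by (rule norm_sum)
  also have "\<dots> \<le> (\<Sum>c = 0..2*d-2-j. ky_fan_norm (dim_in d j c) (Pi_proj d (c+j) * Y * Pi_proj d c))"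
    unfolding f_def S_def by (intro sum_mono block_sum_le_ky_fan_norm[OF Y z])
  also have "\<dots> = (\<Sum>c = 0..2*d-2-j. ky_fan_norm (dim_in d j c) (Pi_proj d (c+j) * bmode d j X * Pi_proj d c))"
    unfolding Y_def ky_fan_norm_Pi_proj_sandwich_conj[OF V comm X] Pi_proj_sandwich_bmode[OF X] ..
  finally show ?thesis unfolding A_def Y_def .
qed

theorem mainTheorem7:
  fixes d j :: nat and \<rho> :: "complex mat"
  assumes "density_op d \<rho>"
    and "1 \<le> j" and "j \<le> d - 1"
  shows "DeltaM_A d j \<rho> \<le>
    (\<Sum>c = 0..2*d-2-j. ky_fan_norm (dim_in d j c)
        (Pi_proj d (c+j) * bmode d j (tensor d \<rho> \<rho>) * Pi_proj d c))
    - trace_norm (smode d j \<rho>)"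
proof -
  let ?X = "tensor d \<rho> \<rho>"
  let ?R = "\<Sum>c = 0..2*d-2-j. ky_fan_norm (dim_in d j c) (Pi_proj d (c+j) * bmode d j ?X * Pi_proj d c)"
  have X: "?X \<in> carrier_mat (d*d) (d*d)" unfolding tensor_def by simp
  have "1\<^sub>m (d*d) * L_AB d = L_AB d * 1\<^sub>m (d*d)" unfolding L_AB_def by simp
  then have "Sup {Mj d j (ptrace_B d (V * ?X * mat_adjoint V)) | V.
      unitary (d*d) V \<and> V * L_AB d = L_AB d * V} \<le> ?R"
    using unitary_one[of "d*d"] trace_norm_smode_ptrace_le_sum_ky_fan_norm[OF X]
    unfolding Mj_def by (intro cSup_least) blast+
  then show ?thesis unfolding DeltaM_A_def Mj_def by simp
qed

end
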